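(* Consider logistic regression with binary responses $y_i\in\{0,1\}$, $i=1,\dots,n$, design matrix $X\in\mathbb{R}^{n\times(p+1)}$ whose first column is the intercept column, whose next $m$ columns are mandatory predictors and whose remaining columns form $X_u\in\mathbb{R}^{n\times(p-m)}$, and log-likelihood $\ell(\beta_0,\boldsymbol{\beta})=\sum_{i=1}^n\bigl(y_i\eta_i-\log(1+e^{\eta_i})\bigr)$ with $\eta_i=\beta_0+\mathbf{x}_i^\top\boldsymbol{\beta}$. Fix $\lambda\ge0$, let $\nu_{\max}$ be the largest eigenvalue of $X_u^\top X_u$, and let $\delta\ge\nu_{\max}/(8n)$, $\delta>0$. For $\mathbf{t}\in[0,1]^{p-m}$ let $T_{\mathbf{t}}=\mathrm{diag}(1,\dots,1,t_1,\dots,t_{p-m})$ (with $m$ leading ones), $\Gamma_{\mathbf{t}}=\sqrt{I-T_{\mathbf{t}}^2}$, and $$f_{\delta,\lambda}(\mathbf{t})=\inf_{\beta_0,\boldsymbol{\beta}}\Bigl[-\tfrac1n\ell(\beta_0,T_{\mathbf{t}}\boldsymbol{\beta})+\lambda\|\boldsymbol{\beta}\|_2^2+\delta\|\Gamma_{\mathbf{t}}\boldsymbol{\beta}\|_2^2\Bigr].$$ Then $f_{\delta,\lambda}$ is concave on $(0,1)^{p-m}$ (extending concavely to $\mathcal{T}_k=\{\mathbf{t}\in[0,1]^{p-m}:\mathbf{1}^\top\mathbf{t}=k\}$), and a minimizer of $f_{\delta,\lambda}$ over $\mathcal{T}_k$ can be chosen in $\mathcal{S}_k=\{\mathbf{s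}\in\{0,1\}^{p-m}:\mathbf{1}^\top\mathbf{s}=k\}$.
   Context: Here $\mathbf{x}_i^\top$ is the $i$th row of $X$ without the intercept entry. The quantity $\nu_{\max}/(8n)$ is the paper's explicit concavity threshold for logistic regression. *)

theory Defs
  imports Complex_Main "Jordan_Normal_Form.Matrix" "Jordan_Normal_Form.Char_Poly"
begin

(* Data: n observations, responses y i (i < n), predictor matrix x i j (i < n, j < p),
   i.e. the design matrix X without its intercept column.  Columns j < m are the
   mandatory predictors, columns m + l (l < p - m) form X_u.
   Vectors beta are functions nat => real, only coordinates j < p are relevant.
   The selection vector t is indexed by l < p - m (t l corresponds to column m + l). *)

definition loglik :: "nat \<Rightarrow> nat \<Rightarrow> (nat \<Rightarrow> real) \<Rightarrow> (nat \<Rightarrow> nat \<Rightarrow> real)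
                       \<Rightarrow> real \<Rightarrow> (nat \<Rightarrow> real) \<Rightarrow> real" where
  "loglik n p y x b0 b =
     (\<Sum>i<n. let eta = b0 + (\<Sum>j<p. x i j * b j) in y i * eta - ln (1 + exp eta))"

definition Tdiag :: "nat \<Rightarrow> (nat \<Rightarrow> real) \<Rightarrow> nat \<Rightarrow> real" where
  "Tdiag m t j = (if j < m then 1 else t (j - m))"

definition Gdiag :: "nat \<Rightarrow> (nat \<Rightarrow> real) \<Rightarrow> nat \<Rightarrow> real" where
  "Gdiag m t j = sqrt (1 - (Tdiag m t j)\<^sup>2)"

definition fobj :: "nat \<Rightarrow> nat \<Rightarrow> nat \<Rightarrow> (nat \<Rightarrow> real) \<Rightarrow> (nat \<Rightarrow> nat \<Rightarrow> real)
                     \<Rightarrow> real \<Rightarrow> real \<Rightarrow> (nat \<Rightarrow> real) \<Rightarrow> real" where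
  "fobj n p m y x \<delta> lam t =
     Inf (range (\<lambda>(b0::real, b::nat \<Rightarrow> real).
        - (1 / real n) * loglik n p y x b0 (\<lambda>j. Tdiag m t j * b j)
        + lam * (\<Sum>j<p. (b j)\<^sup>2)
        + \<delta> * (\<Sum>j<p. (Gdiag m t j * b j)\<^sup>2)))"

definition Xu :: "nat \<Rightarrow> nat \<Rightarrow> nat \<Rightarrow> (nat \<Rightarrow> nat \<Rightarrow> real) \<Rightarrow> real mat" where
  "Xu n p m x = mat n (p - m) (\<lambda>(i, l). x i (m + l))"

definition nu_max :: "nat \<Rightarrow> nat \<Rightarrow> nat \<Rightarrow> (nat \<Rightarrow> nat \<Rightarrow> real) \<Rightarrow> real" where
  "nu_max n p m x = Max {ev. eigenvalue (transpose_mat (Xu n p m x) * Xu n p m x) ev}"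

(* points of R^{p-m}, represented as functions vanishing outside {..<d} *)
definition open_cube :: "nat \<Rightarrow> (nat \<Rightarrow> real) set" where
  "open_cube d = {t. (\<forall>l<d. 0 < t l \<and> t l < 1) \<and> (\<forall>l\<ge>d. t l = 0)}"

definition Tset :: "nat \<Rightarrow> nat \<Rightarrow> (nat \<Rightarrow> real) set" where
  "Tset d k = {t. (\<forall>l<d. 0 \<le> t l \<and> t l \<le> 1) \<and> (\<forall>l\<ge>d. t l = 0) \<and> (\<Sum>l<d. t l) = real k}"

definition Sset :: "nat \<Rightarrow> nat \<Rightarrow> (nat \<Rightarrow> real) set" where
  "Sset d k = {s. (\<forall>l<d. s l \<in> {0, 1}) \<and> (\<forall>l\<ge>d. s l = 0) \<and> (\<Sum>l<d. s l) = real k}"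

definition concave_on_fun :: "(nat \<Rightarrow> real) set \<Rightarrow> ((nat \<Rightarrow> real) \<Rightarrow> real) \<Rightarrow> bool" where
  "concave_on_fun D f \<longleftrightarrow>
     (\<forall>t\<in>D. \<forall>s\<in>D. \<forall>a::real. 0 \<le> a \<and> a \<le> 1 \<longrightarrow>
        a * f t + (1 - a) * f s \<le> f (\<lambda>l. a * t l + (1 - a) * s l))"

end

theory Submission
  imports Defs "HOL-Analysis.Function_Topology" "HOL-Analysis.Convex" "Jordan_Normal_Form.Spectral_Radius"
begin

(* Fix the coefficients (b0, b) and move t along a segment from s to t.  The linear predictors
   eta_i = b0 + x_i^T T_t b then move by (X_u w)_i, where w_l = b_(m+l) (t_l - s_l).  Since the
   second derivative of u |-> ln (1 + e^u) is at most 1/4, the Jensen gap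
   a F(t) + (1 - a) F(s) - F(a t + (1 - a) s) of the loss F = -(1/n) loglik is at most
   a (1 - a) |X_u w|^2 / (8 n) <= a (1 - a) nu_max |w|^2 / (8 n).  The penalty
   delta |Gamma_t b|^2 = delta sum_j (1 - T_j^2) b_j^2 is a concave quadratic in t whose Jensen gap is
   exactly -a (1 - a) delta |w|^2.  Hence delta >= nu_max / (8 n) makes every penalized loss concave
   in t, and so is their infimum f.
   A concave function on the polytope T_k is minimised at a vertex: a point of T_k with a fractional
   coordinate has a second one, and shifting mass between the two in either direction writes it as a
   convex combination of points of T_k with fewer fractional coordinates. *)

section \<open>Rayleigh quotient bound\<close>

definition sqnorm :: "nat \<Rightarrow> (nat \<Rightarrow> real) \<Rightarrow> real" where
  "sqnorm d u = (\<Sum>l<d. (u l)\<^sup>2)"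

definition matvec :: "nat \<Rightarrow> (nat \<Rightarrow> nat \<Rightarrow> real) \<Rightarrow> (nat \<Rightarrow> real) \<Rightarrow> nat \<Rightarrow> real" where
  "matvec d M u i = (\<Sum>l<d. M i l * u l)"

definition gram_mat :: "nat \<Rightarrow> nat \<Rightarrow> (nat \<Rightarrow> nat \<Rightarrow> real) \<Rightarrow> real mat" where
  "gram_mat n d M = transpose_mat (mat n d (\<lambda>(i, l). M i l)) * mat n d (\<lambda>(i, l). M i l)"

definition max_eigenvalue :: "real mat \<Rightarrow> real" where
  "max_eigenvalue A = Max {ev. eigenvalue A ev}"

lemma sqnorm_nonneg: "0 \<le> sqnorm d u"
  unfolding sqnorm_def by (simp add: sum_nonneg)

lemma sqnorm_eq_0_iff: "sqnorm d u = 0 \<longleftrightarrow> (\<forall>l<d. u l = 0)"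
  unfolding sqnorm_def by (auto simp: sum_nonneg_eq_0_iff)

lemma sqnorm_add_scaled:
  "sqnorm d (\<lambda>l. u l + s * v l) = sqnorm d u + 2 * s * (\<Sum>l<d. u l * v l) + s\<^sup>2 * sqnorm d v"
  unfolding sqnorm_def
  by (simp add: power2_eq_square algebra_simps sum.distrib sum_distrib_left)

lemma matvec_add_scaled: "matvec d M (\<lambda>l. u l + s * v l) i = matvec d M u i + s * matvec d M v i"
  unfolding matvec_def by (simp add: algebra_simps sum.distrib sum_distrib_left)

lemma matvec_scale: "matvec d M (\<lambda>l. u l / r) i = matvec d M u i / r"
  unfolding matvec_def by (simp add: sum_divide_distrib)

lemma matvec_cong: "(\<And>l. l < d \<Longrightarrow> u l = v l) \<Longrightarrow> matvec d M u i = matvec d M v i"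
  unfolding matvec_def by simp

lemma inner_matvec_eq:
  "(\<Sum>i<n. matvec d M u i * matvec d M v i) = (\<Sum>l<d. v l * (\<Sum>i<n. M i l * matvec d M u i))"
proof -
  have "(\<Sum>i<n. matvec d M u i * matvec d M v i) = (\<Sum>i<n. \<Sum>l<d. matvec d M u i * (M i l * v l))"
    by (simp add: matvec_def[of d M v] sum_distrib_left)
  also have "\<dots> = (\<Sum>l<d. \<Sum>i<n. matvec d M u i * (M i l * v l))" by (rule sum.swap)
  finally show ?thesis by (simp add: sum_distrib_left mult_ac)
qed

lemma le_max_eigenvalue:
  assumes "A \<in> carrier_mat d d" and "eigenvalue A c"
  shows "c \<le> max_eigenvalue A"
  using assms card_finite_spectrum[OF assms(1)]
  unfolding max_eigenvalue_def spectrum_def by (simp add: Max_ge)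

lemma gram_mat_carrier: "gram_mat n d M \<in> carrier_mat d d"
  unfolding gram_mat_def by auto

lemma eigenvalue_gram_mat:
  assumes "sqnorm d u \<noteq> 0" and "\<forall>l<d. (\<Sum>i<n. M i l * matvec d M u i) = c * u l"
  shows "eigenvalue (gram_mat n d M) c"
proof -
  let ?A = "gram_mat n d M" and ?v = "vec d u"
  have A: "?A \<in> carrier_mat d d" by (rule gram_mat_carrier)
  have "?v \<noteq> 0\<^sub>v d"
    using assms(1) by (metis index_vec index_zero_vec(1) sqnorm_eq_0_iff)
  moreover have "?A *\<^sub>v ?v = c \<cdot>\<^sub>v ?v"
  proof (rule eq_vecI)
    fix l assume "l < dim_vec (c \<cdot>\<^sub>v ?v)"
    then have l: "l < d" by simp
    have "(?A *\<^sub>v ?v) $ l = (\<Sum>l'<d. (\<Sum>i<n. M i l * M i l') * u l')"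
      using l unfolding gram_mat_def
      by (auto simp: scalar_prod_def lessThan_atLeast0 intro!: sum.cong)
    also have "\<dots> = (\<Sum>i<n. M i l * matvec d M u i)"
      unfolding matvec_def
      by (simp add: sum_distrib_left sum_distrib_right mult.assoc sum.swap[of _ "{..<d}"])
    finally show "(?A *\<^sub>v ?v) $ l = (c \<cdot>\<^sub>v ?v) $ l" using assms(2) l by simp
  qed (use A in simp)
  ultimately show ?thesis
    unfolding eigenvalue_def eigenvector_def using A by (intro exI[of _ ?v]) auto
qed

lemma linear_coeff_eq_0_if_nonneg:
  fixes a b :: real
  assumes "\<And>s. 0 \<le> a * s + b * s\<^sup>2"
  shows "a = 0"
proof (rule ccontr)
  assume "a \<noteq> 0"
  define c where "c = \<bar>b\<bar> + 1"
  have c: "0 < c" "b < c" unfolding c_def by auto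
  have "a * (- a / c) + b * (- a / c)\<^sup>2 = a\<^sup>2 * (b - c) / c\<^sup>2"
    using c by (simp add: power2_eq_square field_simps)
  also have "\<dots> < 0"
    using \<open>a \<noteq> 0\<close> c by (intro divide_neg_pos mult_pos_neg) auto
  finally show False using assms[of "- a / c"] by simp
qed

text \<open>A maximiser of the Rayleigh quotient is an eigenvector: the quadratic form
  \<open>c |v|\<^sup>2 - |M v|\<^sup>2\<close> is nonnegative and vanishes at \<open>u\<close>, so its derivative at \<open>u\<close>,
  which is \<open>-2 (M\<^sup>T M u - c u)\<close>, vanishes.\<close>
lemma stationary_if_rayleigh_max:
  assumes bound: "\<And>v. sqnorm n (matvec d M v) \<le> c * sqnorm d v"
    and u: "sqnorm n (matvec d M u) = c * sqnorm d u"
  shows "\<forall>l<d. (\<Sum>i<n. M i l * matvec d M u i) = c * u l"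
proof -
  define S where "S l = (\<Sum>i<n. M i l * matvec d M u i)" for l
  define r where "r l = S l - c * u l" for l
  define K where "K = c * sqnorm d r - sqnorm n (matvec d M r)"
  have sq: "(r l)\<^sup>2 = r l * S l - c * (u l * r l)" for l
    by (simp add: r_def power2_eq_square algebra_simps)
  have "sqnorm d r = (\<Sum>l<d. r l * S l) - c * (\<Sum>l<d. u l * r l)"
    by (simp add: sqnorm_def sq sum_subtractf sum_distrib_left)
  then have cross: "c * (\<Sum>l<d. u l * r l) - (\<Sum>i<n. matvec d M u i * matvec d M r i) = - sqnorm d r"
    unfolding inner_matvec_eq S_def by simp
  have "0 \<le> (- 2 * sqnorm d r) * s + K * s\<^sup>2" for s
  proof -
    have "0 \<le> c * sqnorm d (\<lambda>l. u l + s * r l) - sqnorm n (matvec d M (\<lambda>l. u l + s * r l))"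
      using bound by simp
    also have "\<dots> = 2 * s * (c * (\<Sum>l<d. u l * r l) - (\<Sum>i<n. matvec d M u i * matvec d M r i)) + K * s\<^sup>2"
      unfolding matvec_add_scaled sqnorm_add_scaled K_def u by (simp add: algebra_simps)
    finally show ?thesis unfolding cross by (simp add: algebra_simps)
  qed
  then have "sqnorm d r = 0" using linear_coeff_eq_0_if_nonneg by fastforce
  then show ?thesis unfolding sqnorm_eq_0_iff r_def S_def by simp
qed

lemma abs_le_1_if_sqnorm_eq_1:
  assumes "sqnorm d v = 1" "l < d"
  shows "\<bar>v l\<bar> \<le> 1"
proof -
  have "(v l)\<^sup>2 \<le> sqnorm d v" unfolding sqnorm_def using assms(2) by (intro member_le_sum) auto
  then show ?thesis using assms(1) by (simp add: abs_square_le_1)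
qed

lemma sqnorm_matvec_le_if_unit:
  assumes unit: "\<And>u. \<forall>l\<ge>d. u l = 0 \<Longrightarrow> sqnorm d u = 1 \<Longrightarrow> sqnorm n (matvec d M u) \<le> c"
  shows "sqnorm n (matvec d M v) \<le> c * sqnorm d v"
proof (cases "sqnorm d v = 0")
  case True
  then have "matvec d M v i = 0" for i
    unfolding sqnorm_eq_0_iff matvec_def by simp
  then show ?thesis using True by (simp add: sqnorm_def)
next
  case False
  define r where "r = sqrt (sqnorm d v)"
  have pos: "0 < sqnorm d v" using False sqnorm_nonneg[of d v] by linarith
  then have r: "r > 0" "r\<^sup>2 = sqnorm d v" unfolding r_def by auto
  define u where "u l = (if l < d then v l / r else 0)" for l
  have "matvec d M u i = matvec d M v i / r" for i
    unfolding matvec_scale[symmetric] by (rule matvec_cong) (simp add: u_def)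
  then have "sqnorm n (matvec d M u) = sqnorm n (matvec d M v) / r\<^sup>2"
    by (simp add: sqnorm_def power_divide sum_divide_distrib)
  moreover have "sqnorm d u = 1"
    using r pos unfolding u_def sqnorm_def by (simp add: power_divide flip: sum_divide_distrib)
  ultimately have "sqnorm n (matvec d M v) / r\<^sup>2 \<le> c" using unit[of u] by (simp add: u_def)
  then show ?thesis using r pos by (simp add: pos_divide_le_eq mult.commute)
qed

text \<open>Vectors are functions \<open>nat \<Rightarrow> real\<close>; pinning the coordinates \<open>\<ge> d\<close> to \<open>0\<close> makes
  the unit sphere a closed subset of a compact box of the product topology.\<close>
lemma rayleigh_max_exists:
  assumes "0 < d"
  obtains u where "sqnorm d u = 1"
    and "\<And>v. \<forall>l\<ge>d. v l = 0 \<Longrightarrow> sqnorm d v = 1 \<Longrightarrow> sqnorm n (matvec d M v) \<le> sqnorm n (matvec d M u)"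
proof -
  define K where "K l = (if l < d then {-1..1::real} else {0})" for l
  define S where "S = {u. (\<forall>l. u l \<in> K l) \<and> sqnorm d u = 1}"
  have "compactin (product_topology (\<lambda>i. euclidean) UNIV) (PiE UNIV K)"
    by (simp add: compactin_PiE K_def)
  then have "compact {u. \<forall>l. u l \<in> K l}"
    by (simp add: euclidean_product_topology PiE_def Pi_def)
  moreover have "closed {u. sqnorm d u = 1}"
    unfolding sqnorm_def by (intro closed_Collect_eq continuous_intros) auto
  ultimately have "compact S"
    unfolding S_def by (simp add: Collect_conj_eq compact_Int_closed)
  moreover have "(\<lambda>l. if l = 0 then 1 else 0) \<in> S"
  proof -
    have "sqnorm d (\<lambda>l. if l = 0 then 1 else 0) = (\<Sum>l<d. if l = 0 then 1 else 0)"
      unfolding sqnorm_def by (rule sum.cong) auto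
    then show ?thesis using assms unfolding S_def K_def by simp
  qed
  moreover have "continuous_on S (\<lambda>u. sqnorm n (matvec d M u))"
    unfolding sqnorm_def matvec_def
    by (intro continuous_intros)
      (auto intro: continuous_on_subset[OF continuous_on_product_coordinates])
  ultimately obtain u where "u \<in> S" "\<forall>v\<in>S. sqnorm n (matvec d M v) \<le> sqnorm n (matvec d M u)"
    using continuous_attains_sup[of S] by blast
  moreover have "v \<in> S" if "\<forall>l\<ge>d. v l = 0" "sqnorm d v = 1" for v
    using that abs_le_1_if_sqnorm_eq_1[OF that(2)] unfolding S_def K_def
    by (auto simp: abs_le_iff not_less)
  ultimately show thesis using that unfolding S_def by blast
qed

theorem sqnorm_matvec_le_max_eigenvalue:
  "sqnorm n (matvec d M w) \<le> max_eigenvalue (gram_mat n d M) * sqnorm d w"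
proof (cases "d = 0")
  case True
  then show ?thesis by (simp add: sqnorm_def matvec_def)
next
  case False
  then obtain u where u1: "sqnorm d u = 1"
    and max: "\<And>v. \<forall>l\<ge>d. v l = 0 \<Longrightarrow> sqnorm d v = 1
      \<Longrightarrow> sqnorm n (matvec d M v) \<le> sqnorm n (matvec d M u)"
    using rayleigh_max_exists by blast
  let ?c = "sqnorm n (matvec d M u)"
  have bound: "sqnorm n (matvec d M v) \<le> ?c * sqnorm d v" for v
    using max by (rule sqnorm_matvec_le_if_unit)
  have "eigenvalue (gram_mat n d M) ?c"
    using u1 stationary_if_rayleigh_max[OF bound, of u] by (intro eigenvalue_gram_mat) auto
  then have "?c \<le> max_eigenvalue (gram_mat n d M)"
    using gram_mat_carrier by (rule le_max_eigenvalue[rotated])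
  then show ?thesis
    using bound[of w] sqnorm_nonneg[of d w] by (meson mult_right_mono order_trans)
qed

section \<open>Curvature of the softplus function\<close>

lemma one_plus_exp_pos: "0 < 1 + exp (t :: real)"
  using exp_gt_zero[of t] by linarith

lemma logistic_has_derivative:
  "((\<lambda>t. exp t / (1 + exp t)) has_real_derivative exp t / (1 + exp t)\<^sup>2) (at t)"
proof -
  have ne: "1 + exp t \<noteq> 0" using one_plus_exp_pos[of t] by linarith
  show ?thesis
    by (rule derivative_eq_intros refl | use ne in \<open>simp add: field_simps power2_eq_square\<close>)+
qed

lemma softplus_has_derivative:
  "((\<lambda>t. ln (1 + exp t)) has_real_derivative exp t / (1 + exp t)) (at t)"
  by (rule derivative_eq_intros refl | use one_plus_exp_pos[of t] in \<open>simp add: field_simps\<close>)+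

lemma logistic_derivative_le: "exp t / (1 + exp t)\<^sup>2 \<le> (1 / 4 :: real)"
proof -
  have "4 * exp t \<le> (1 + exp t)\<^sup>2"
    using sum_squares_ge_zero[of "1 - exp t" 0] by (simp add: power2_eq_square algebra_simps)
  then show ?thesis by (simp add: divide_le_eq)
qed

lemma convex_on_sq_div_8_minus_softplus: "convex_on UNIV (\<lambda>t. t\<^sup>2 / 8 - ln (1 + exp t))"
proof (rule convex_on_realI[where f' = "\<lambda>t. t / 4 - exp t / (1 + exp t)"])
  fix t :: real
  have "((\<lambda>t. t\<^sup>2 / 8) has_real_derivative t / 4) (at t)"
    by (auto intro!: derivative_eq_intros)
  then show "((\<lambda>t. t\<^sup>2 / 8 - ln (1 + exp t)) has_real_derivative t / 4 - exp t / (1 + exp t)) (at t)"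
    by (intro derivative_intros softplus_has_derivative)
next
  fix u v :: real
  assume "u \<le> v"
  then show "u / 4 - exp u / (1 + exp u) \<le> v / 4 - exp v / (1 + exp v)"
  proof (rule DERIV_nonneg_imp_nondecreasing)
    fix t :: real
    have "((\<lambda>t. t / 4 - exp t / (1 + exp t)) has_real_derivative 1 / 4 - exp t / (1 + exp t)\<^sup>2) (at t)"
      by (intro derivative_intros logistic_has_derivative) (auto intro!: derivative_eq_intros)
    then show "\<exists>y. ((\<lambda>t. t / 4 - exp t / (1 + exp t)) has_real_derivative y) (at t) \<and> 0 \<le> y"
      using logistic_derivative_le[of t] by auto
  qed
qed auto

lemma softplus_convex_comb_le:
  fixes a u v :: real
  assumes "0 \<le> a" "a \<le> 1"
  shows "a * ln (1 + exp u) + (1 - a) * ln (1 + exp v)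
         \<le> ln (1 + exp (a * u + (1 - a) * v)) + a * (1 - a) / 8 * (u - v)\<^sup>2"
proof -
  have "(a * u + (1 - a) * v)\<^sup>2 / 8 - ln (1 + exp (a * u + (1 - a) * v))
      \<le> a * (u\<^sup>2 / 8 - ln (1 + exp u)) + (1 - a) * (v\<^sup>2 / 8 - ln (1 + exp v))"
    using convex_onD[OF convex_on_sq_div_8_minus_softplus, of "1 - a" u v] assms by simp
  moreover have "a * (u\<^sup>2 / 8) + (1 - a) * (v\<^sup>2 / 8) - (a * u + (1 - a) * v)\<^sup>2 / 8
      = a * (1 - a) / 8 * (u - v)\<^sup>2"
    by (simp add: power2_eq_square field_simps)
  ultimately show ?thesis unfolding right_diff_distrib by linarith
qed

section \<open>Concavity of the profiled objective\<close>

definition unit_box :: "nat \<Rightarrow> (nat \<Rightarrow> real) set" where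
  "unit_box d = {t. \<forall>l<d. 0 \<le> t l \<and> t l \<le> 1}"

lemma convex_comb_in_unit_box:
  assumes "t \<in> unit_box d" "s \<in> unit_box d" "0 \<le> a" "a \<le> 1"
  shows "(\<lambda>l. a * t l + (1 - a) * s l) \<in> unit_box d"
  unfolding unit_box_def
proof (intro CollectI allI impI)
  fix l assume "l < d"
  then have "0 \<le> t l" "t l \<le> 1" "0 \<le> s l" "s l \<le> 1"
    using assms(1,2) unfolding unit_box_def by auto
  with assms(3,4) show "0 \<le> a * t l + (1 - a) * s l \<and> a * t l + (1 - a) * s l \<le> 1"
    by (smt (verit) mult_left_le mult_nonneg_nonneg)
qed

lemma concave_on_fun_subset: "concave_on_fun D f \<Longrightarrow> D' \<subseteq> D \<Longrightarrow> concave_on_fun D' f"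
  unfolding concave_on_fun_def by blast

lemma concave_on_fun_Inf:
  assumes conc: "\<And>c. concave_on_fun D (\<lambda>t. F t c)" and bdd: "\<And>t. bdd_below (range (F t))"
  shows "concave_on_fun D (\<lambda>t. Inf (range (F t)))"
  unfolding concave_on_fun_def
proof (intro ballI allI impI)
  fix t s and a :: real assume t: "t \<in> D" and s: "s \<in> D" and a: "0 \<le> a \<and> a \<le> 1"
  show "a * Inf (range (F t)) + (1 - a) * Inf (range (F s)) \<le> Inf (range (F (\<lambda>l. a * t l + (1 - a) * s l)))"
  proof (rule cInf_greatest)
    fix v assume "v \<in> range (F (\<lambda>l. a * t l + (1 - a) * s l))"
    then obtain c where v: "v = F (\<lambda>l. a * t l + (1 - a) * s l) c" by blast
    have "a * Inf (range (F t)) \<le> a * F t c" "(1 - a) * Inf (range (F s)) \<le> (1 - a) * F s c"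
      using a bdd by (auto intro!: mult_left_mono cInf_lower)
    moreover have "a * F t c + (1 - a) * F s c \<le> v"
      using conc[of c] t s a unfolding v concave_on_fun_def by blast
    ultimately show "a * Inf (range (F t)) + (1 - a) * Inf (range (F s)) \<le> v" by linarith
  qed simp
qed

lemma sum_lessThan_split:
  fixes f :: "nat \<Rightarrow> 'a::comm_monoid_add"
  assumes "m \<le> p"
  shows "(\<Sum>j<p. f j) = (\<Sum>j<m. f j) + (\<Sum>l<p - m. f (m + l))"
proof -
  have "(\<Sum>j<p. f j) = (\<Sum>j\<in>{0..<m}. f j) + (\<Sum>j\<in>{m..<p}. f j)"
    using sum.atLeastLessThan_concat[of 0 m p f] assms by (simp add: atLeast0LessThan)
  then show ?thesis by (simp add: sum.atLeastLessThan_shift_0[of f m p] atLeast0LessThan comp_def)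
qed

lemma sum_Tdiag_diff:
  assumes "m \<le> p"
  shows "(\<Sum>j<p. f j * (Tdiag m t j - Tdiag m s j)) = (\<Sum>l<p - m. f (m + l) * (t l - s l))"
  unfolding sum_lessThan_split[OF assms] by (simp add: Tdiag_def)

lemma Tdiag_convex_comb:
  "Tdiag m (\<lambda>l. a * t l + (1 - a) * s l) j = a * Tdiag m t j + (1 - a) * Tdiag m s j"
  unfolding Tdiag_def by (simp add: algebra_simps)

lemma Gdiag_sq:
  assumes "t \<in> unit_box (p - m)" "j < p"
  shows "(Gdiag m t j)\<^sup>2 = 1 - (Tdiag m t j)\<^sup>2"
proof -
  have "0 \<le> Tdiag m t j" "Tdiag m t j \<le> 1"
    using assms unfolding unit_box_def Tdiag_def by auto
  then have "(Tdiag m t j)\<^sup>2 \<le> 1" by (simp add: abs_square_le_1)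
  then show ?thesis unfolding Gdiag_def by simp
qed

lemma loglik_nonpos:
  assumes "\<forall>i<n. y i \<in> {0, 1}"
  shows "loglik n p y x b0 b \<le> 0"
  unfolding loglik_def Let_def
proof (rule sum_nonpos)
  fix i assume "i \<in> {..<n}"
  then have "y i = 0 \<or> y i = 1" using assms by auto
  moreover have "e \<le> ln (1 + exp e)" "0 \<le> ln (1 + exp e)" for e :: real
  proof -
    have "ln (exp e) \<le> ln (1 + exp e)"
      by (subst ln_le_cancel_iff) (use one_plus_exp_pos[of e] in auto)
    then show "e \<le> ln (1 + exp e)" by simp
  qed simp
  ultimately show "y i * (b0 + (\<Sum>j<p. x i j * b j)) - ln (1 + exp (b0 + (\<Sum>j<p. x i j * b j))) \<le> 0"
    by auto
qed

lemma loglik_convex_comb_le: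
  assumes "0 \<le> a" "a \<le> 1"
  shows "loglik n p y x b0 (\<lambda>j. a * \<beta> j + (1 - a) * \<gamma> j)
    \<le> a * loglik n p y x b0 \<beta> + (1 - a) * loglik n p y x b0 \<gamma>
      + a * (1 - a) / 8 * sqnorm n (\<lambda>i. \<Sum>j<p. x i j * (\<beta> j - \<gamma> j))"
proof -
  define \<eta> where "\<eta> \<beta> i = b0 + (\<Sum>j<p. x i j * \<beta> j)" for \<beta> i
  define sp where "sp u = ln (1 + exp u)" for u :: real
  have ll: "loglik n p y x b0 \<beta> = (\<Sum>i<n. y i * \<eta> \<beta> i - sp (\<eta> \<beta> i))" for \<beta>
    unfolding loglik_def \<eta>_def sp_def Let_def ..
  have "(\<Sum>j<p. x i j * (a * \<beta> j + (1 - a) * \<gamma> j))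
      = a * (\<Sum>j<p. x i j * \<beta> j) + (1 - a) * (\<Sum>j<p. x i j * \<gamma> j)" for i
    unfolding sum_distrib_left sum.distrib[symmetric] by (rule sum.cong) (simp_all add: algebra_simps)
  then have comb: "\<eta> (\<lambda>j. a * \<beta> j + (1 - a) * \<gamma> j) i = a * \<eta> \<beta> i + (1 - a) * \<eta> \<gamma> i" for i
    unfolding \<eta>_def by (simp add: algebra_simps)
  have diff: "\<eta> \<beta> i - \<eta> \<gamma> i = (\<Sum>j<p. x i j * (\<beta> j - \<gamma> j))" for i
    unfolding \<eta>_def by (simp add: algebra_simps flip: sum_subtractf)
  have "loglik n p y x b0 (\<lambda>j. a * \<beta> j + (1 - a) * \<gamma> j)
        - (a * loglik n p y x b0 \<beta> + (1 - a) * loglik n p y x b0 \<gamma>)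
      = (\<Sum>i<n. a * sp (\<eta> \<beta> i) + (1 - a) * sp (\<eta> \<gamma> i) - sp (a * \<eta> \<beta> i + (1 - a) * \<eta> \<gamma> i))"
    unfolding ll comb sum_distrib_left by (simp add: algebra_simps flip: sum.distrib sum_subtractf)
  also have "\<dots> \<le> (\<Sum>i<n. a * (1 - a) / 8 * (\<eta> \<beta> i - \<eta> \<gamma> i)\<^sup>2)"
    using softplus_convex_comb_le[OF assms] unfolding sp_def by (intro sum_mono) smt
  also have "\<dots> = a * (1 - a) / 8 * sqnorm n (\<lambda>i. \<Sum>j<p. x i j * (\<beta> j - \<gamma> j))"
    unfolding sqnorm_def diff by (simp add: sum_distrib_left)
  finally show ?thesis by simp
qed

definition penalized_loss :: "nat \<Rightarrow> nat \<Rightarrow> nat \<Rightarrow> (nat \<Rightarrow> real) \<Rightarrow> (nat \<Rightarrow> nat \<Rightarrow> real)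
    \<Rightarrow> real \<Rightarrow> real \<Rightarrow> (nat \<Rightarrow> real) \<Rightarrow> real \<Rightarrow> (nat \<Rightarrow> real) \<Rightarrow> real" where
  "penalized_loss n p m y x \<delta> lam t b0 b =
     - (1 / real n) * loglik n p y x b0 (\<lambda>j. Tdiag m t j * b j)
     + lam * (\<Sum>j<p. (b j)\<^sup>2) + \<delta> * (\<Sum>j<p. (Gdiag m t j * b j)\<^sup>2)"

lemma fobj_eq_Inf:
  "fobj n p m y x \<delta> lam t = Inf (range (\<lambda>(b0, b). penalized_loss n p m y x \<delta> lam t b0 b))"
  unfolding fobj_def penalized_loss_def ..

lemma penalized_loss_nonneg:
  assumes "\<forall>i<n. y i \<in> {0, 1}" "0 \<le> lam" "0 \<le> \<delta>"
  shows "0 \<le> penalized_loss n p m y x \<delta> lam t b0 b"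
proof -
  have "0 \<le> - (1 / real n) * loglik n p y x b0 (\<lambda>j. Tdiag m t j * b j)"
    using loglik_nonpos[OF assms(1)] by (simp add: divide_nonpos_nonneg)
  moreover have "0 \<le> lam * (\<Sum>j<p. (b j)\<^sup>2)" "0 \<le> \<delta> * (\<Sum>j<p. (Gdiag m t j * b j)\<^sup>2)"
    using assms(2,3) by (simp_all add: sum_nonneg)
  ultimately show ?thesis unfolding penalized_loss_def by linarith
qed

lemma penalty_convex_comb:
  assumes "m \<le> p" "t \<in> unit_box (p - m)" "s \<in> unit_box (p - m)" "0 \<le> a" "a \<le> 1"
  shows "a * (\<Sum>j<p. (Gdiag m t j * b j)\<^sup>2) + (1 - a) * (\<Sum>j<p. (Gdiag m s j * b j)\<^sup>2)
    = (\<Sum>j<p. (Gdiag m (\<lambda>l. a * t l + (1 - a) * s l) j * b j)\<^sup>2)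
      - a * (1 - a) * sqnorm (p - m) (\<lambda>l. b (m + l) * (t l - s l))"
proof -
  let ?z = "\<lambda>l. a * t l + (1 - a) * s l"
  have z: "?z \<in> unit_box (p - m)" using assms(2-5) by (rule convex_comb_in_unit_box)
  have pointwise: "(Gdiag m ?z j * b j)\<^sup>2 - (a * (Gdiag m t j * b j)\<^sup>2 + (1 - a) * (Gdiag m s j * b j)\<^sup>2)
      = a * (1 - a) * ((Tdiag m t j - Tdiag m s j) * (b j)\<^sup>2) * (Tdiag m t j - Tdiag m s j)"
    if "j < p" for j
    by (simp only: power_mult_distrib Gdiag_sq[OF z that] Gdiag_sq[OF assms(2) that]
        Gdiag_sq[OF assms(3) that] Tdiag_convex_comb) (simp add: power2_eq_square algebra_simps)
  have "(\<Sum>j<p. (Gdiag m ?z j * b j)\<^sup>2) - (a * (\<Sum>j<p. (Gdiag m t j * b j)\<^sup>2) + (1 - a) * (\<Sum>j<p. (Gdiag m s j * b j)\<^sup>2))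
      = (\<Sum>j<p. (Gdiag m ?z j * b j)\<^sup>2 - (a * (Gdiag m t j * b j)\<^sup>2 + (1 - a) * (Gdiag m s j * b j)\<^sup>2))"
    by (simp add: sum_subtractf sum.distrib sum_distrib_left)
  also have "\<dots> = (\<Sum>j<p. a * (1 - a) * ((Tdiag m t j - Tdiag m s j) * (b j)\<^sup>2) * (Tdiag m t j - Tdiag m s j))"
    using pointwise by simp
  also have "\<dots> = a * (1 - a) * sqnorm (p - m) (\<lambda>l. b (m + l) * (t l - s l))"
    unfolding sum_Tdiag_diff[OF assms(1)] sqnorm_def sum_distrib_left
    by (simp add: Tdiag_def power2_eq_square algebra_simps)
  finally show ?thesis by simp
qed

lemma nu_max_eq_max_eigenvalue:
  "nu_max n p m x = max_eigenvalue (gram_mat n (p - m) (\<lambda>i l. x i (m + l)))"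
  unfolding nu_max_def max_eigenvalue_def gram_mat_def Xu_def ..

lemma sqnorm_Xu_div_le:
  assumes "0 < n" and "\<delta> \<ge> nu_max n p m x / (8 * real n)"
  shows "sqnorm n (matvec (p - m) (\<lambda>i l. x i (m + l)) w) / (8 * real n) \<le> \<delta> * sqnorm (p - m) w"
proof -
  have "sqnorm n (matvec (p - m) (\<lambda>i l. x i (m + l)) w) / (8 * real n)
      \<le> nu_max n p m x / (8 * real n) * sqnorm (p - m) w"
    using sqnorm_matvec_le_max_eigenvalue[of n "p - m" _ w] assms(1)
    unfolding nu_max_eq_max_eigenvalue by (simp add: divide_right_mono)
  also have "\<dots> \<le> \<delta> * sqnorm (p - m) w" using assms(2) sqnorm_nonneg by (rule mult_right_mono)
  finally show ?thesis .
qed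

lemma penalized_loss_concave:
  assumes "0 < n" "m \<le> p" and \<delta>: "\<delta> \<ge> nu_max n p m x / (8 * real n)"
  shows "concave_on_fun (unit_box (p - m)) (\<lambda>t. penalized_loss n p m y x \<delta> lam t b0 b)"
  unfolding concave_on_fun_def
proof (intro ballI allI impI)
  fix t s and a :: real
  assume t: "t \<in> unit_box (p - m)" and s: "s \<in> unit_box (p - m)" and a: "0 \<le> a \<and> a \<le> 1"
  let ?z = "\<lambda>l. a * t l + (1 - a) * s l"
  let ?L = "\<lambda>t. loglik n p y x b0 (\<lambda>j. Tdiag m t j * b j)"
  let ?P = "\<lambda>t. \<Sum>j<p. (Gdiag m t j * b j)\<^sup>2"
  let ?PL = "\<lambda>t. penalized_loss n p m y x \<delta> lam t b0 b"
  let ?B = "\<Sum>j<p. (b j)\<^sup>2"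
  define N where "N = 1 / real n"
  have PL: "?PL c = lam * ?B + \<delta> * ?P c - N * ?L c" for c
    unfolding penalized_loss_def N_def by simp
  define w where "w l = b (m + l) * (t l - s l)" for l
  define Q where "Q = sqnorm n (matvec (p - m) (\<lambda>i l. x i (m + l)) w)"
  define W where "W = sqnorm (p - m) w"
  have "(\<Sum>j<p. x i j * (Tdiag m t j * b j - Tdiag m s j * b j)) = matvec (p - m) (\<lambda>i l. x i (m + l)) w i" for i
    using sum_Tdiag_diff[OF assms(2), of "\<lambda>j. x i j * b j" t s]
    unfolding matvec_def w_def by (simp add: algebra_simps)
  then have L: "?L ?z \<le> a * ?L t + (1 - a) * ?L s + a * (1 - a) / 8 * Q"
    using loglik_convex_comb_le[of a n p y x b0 "\<lambda>j. Tdiag m t j * b j" "\<lambda>j. Tdiag m s j * b j"] a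
    unfolding Q_def Tdiag_convex_comb by (simp add: algebra_simps)
  have P: "a * ?P t + (1 - a) * ?P s = ?P ?z - a * (1 - a) * W"
    unfolding W_def w_def using penalty_convex_comb[OF assms(2) t s] a by simp
  have "Q / (8 * real n) \<le> \<delta> * W"
    unfolding Q_def W_def using assms(1) \<delta> by (rule sqnorm_Xu_div_le)
  then have QW: "a * (1 - a) * (N * Q / 8) \<le> a * (1 - a) * (\<delta> * W)"
    using a unfolding N_def by (intro mult_left_mono) auto
  have NL: "N * (?L ?z - a * (1 - a) / 8 * Q) \<le> N * (a * ?L t + (1 - a) * ?L s)"
    using L unfolding N_def by (intro mult_left_mono) auto
  have "a * ?PL t + (1 - a) * ?PL s
      = lam * ?B + \<delta> * (a * ?P t + (1 - a) * ?P s) - N * (a * ?L t + (1 - a) * ?L s)"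
    by (simp add: PL algebra_simps)
  also have "\<dots> \<le> lam * ?B + \<delta> * (?P ?z - a * (1 - a) * W) - N * (?L ?z - a * (1 - a) / 8 * Q)"
    unfolding P using NL by linarith
  also have "\<dots> = ?PL ?z + (a * (1 - a) * (N * Q / 8) - a * (1 - a) * (\<delta> * W))"
    by (simp add: PL algebra_simps)
  also have "\<dots> \<le> ?PL ?z" using QW by simp
  finally show "a * ?PL t + (1 - a) * ?PL s \<le> ?PL ?z" .
qed

lemma fobj_concave_on_unit_box:
  assumes "0 < n" "m \<le> p" "\<forall>i<n. y i \<in> {0, 1}" "0 \<le> lam"
    and "\<delta> \<ge> nu_max n p m x / (8 * real n)" "0 < \<delta>"
  shows "concave_on_fun (unit_box (p - m)) (fobj n p m y x \<delta> lam)"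
  unfolding fobj_eq_Inf
proof (rule concave_on_fun_Inf)
  fix c :: "real \<times> (nat \<Rightarrow> real)"
  show "concave_on_fun (unit_box (p - m)) (\<lambda>t. case c of (b0, b) \<Rightarrow> penalized_loss n p m y x \<delta> lam t b0 b)"
    using penalized_loss_concave[OF assms(1,2,5)] by (cases c) simp
next
  fix t
  show "bdd_below (range (\<lambda>(b0, b). penalized_loss n p m y x \<delta> lam t b0 b))"
    using penalized_loss_nonneg[OF assms(3,4)] assms(6) by (auto intro!: bdd_belowI[where m = 0])
qed

section \<open>Minimising a concave function over \<open>Tset d k\<close>\<close>

definition frac_coords :: "nat \<Rightarrow> (nat \<Rightarrow> real) \<Rightarrow> nat set" where
  "frac_coords d t = {l. l < d \<and> 0 < t l \<and> t l < 1}"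

lemma finite_frac_coords: "finite (frac_coords d t)"
  unfolding frac_coords_def by simp

lemma Sset_if_no_frac_coords:
  assumes "t \<in> Tset d k" "frac_coords d t = {}"
  shows "t \<in> Sset d k"
  using assms unfolding Tset_def Sset_def frac_coords_def by force

text \<open>The coordinates of a point of \<open>Tset d k\<close> sum to an integer, so a fractional
  coordinate never comes alone.\<close>
lemma frac_coords_Tset_other:
  assumes t: "t \<in> Tset d k" and i: "i \<in> frac_coords d t"
  obtains j where "j \<in> frac_coords d t" "j \<noteq> i"
proof -
  have "\<exists>j\<in>frac_coords d t. j \<noteq> i"
  proof (rule ccontr)
    assume none: "\<not> (\<exists>j\<in>frac_coords d t. j \<noteq> i)"
    have int: "t j \<in> \<int>" if "j \<in> {..<d} - {i}" for j
    proof -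
      have "t j = 0 \<or> t j = 1"
        using none that t unfolding Tset_def frac_coords_def by fastforce
      then show ?thesis by auto
    qed
    have "(\<Sum>l<d. t l) = t i + (\<Sum>l\<in>{..<d} - {i}. t l)"
      using i unfolding frac_coords_def by (simp add: sum.remove)
    moreover have "(\<Sum>l\<in>{..<d} - {i}. t l) \<in> \<int>" using int by (rule Ints_sum)
    moreover have "(\<Sum>l<d. t l) = real k" using t unfolding Tset_def by simp
    ultimately have "t i \<in> \<int>" by (metis Ints_diff Ints_of_nat add_diff_cancel_right')
    then obtain z where "t i = of_int z" by (auto elim: Ints_cases)
    with i show False unfolding frac_coords_def by (simp, linarith)
  qed
  then show thesis using that by blast
qed

lemma transfer_in_Tset:
  assumes t: "t \<in> Tset d k" and ij: "i < d" "j < d" "i \<noteq> j"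
    and "0 \<le> t i + e" "t i + e \<le> 1" "0 \<le> t j - e" "t j - e \<le> 1"
  shows "t(i := t i + e, j := t j - e) \<in> Tset d k"
proof -
  have "t(i := t i + e, j := t j - e) = (\<lambda>l. t l + (if l = i then e else 0) - (if l = j then e else 0))"
    using ij by auto
  then have "(\<Sum>l<d. (t(i := t i + e, j := t j - e)) l) = (\<Sum>l<d. t l)"
    using ij by (simp add: sum.distrib sum_subtractf)
  then show ?thesis using assms unfolding Tset_def by auto
qed

lemma frac_coords_transfer_psubset:
  assumes "i \<in> frac_coords d t" "j \<in> frac_coords d t" "i \<noteq> j"
    and "t i + e \<in> {0, 1} \<or> t j - e \<in> {0, 1}"
  shows "frac_coords d (t(i := t i + e, j := t j - e)) \<subset> frac_coords d t"
proof -
  let ?t = "t(i := t i + e, j := t j - e)"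
  have "frac_coords d ?t \<subseteq> frac_coords d t"
    using assms(1,2) unfolding frac_coords_def by auto
  moreover have "i \<notin> frac_coords d ?t \<or> j \<notin> frac_coords d ?t"
    using assms(3,4) unfolding frac_coords_def by auto
  ultimately show ?thesis using assms(1,2) by blast
qed

lemma Tset_split_at_frac_coord:
  assumes t: "t \<in> Tset d k" and i: "i \<in> frac_coords d t"
  obtains t1 t2 a where "t1 \<in> Tset d k" "t2 \<in> Tset d k"
    "frac_coords d t1 \<subset> frac_coords d t" "frac_coords d t2 \<subset> frac_coords d t"
    "0 \<le> a" "a \<le> 1" "t = (\<lambda>l. a * t1 l + (1 - a) * t2 l)"
proof -
  obtain j where j: "j \<in> frac_coords d t" "j \<noteq> i" using frac_coords_Tset_other[OF t i] .
  have ti: "i < d" "0 < t i" "t i < 1" and tj: "j < d" "0 < t j" "t j < 1"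
    using i j(1) unfolding frac_coords_def by auto
  define move where "move e = t(i := t i + e, j := t j - e)" for e
  define ep where "ep = min (1 - t i) (t j)"
  define em where "em = min (t i) (1 - t j)"
  have ep: "0 < ep" and em: "0 < em" using ti tj unfolding ep_def em_def by auto
  have "move ep \<in> Tset d k" "move (- em) \<in> Tset d k"
    unfolding move_def using ti tj j(2)
    by (intro transfer_in_Tset[OF t]; simp add: ep_def em_def)+
  moreover have "frac_coords d (move ep) \<subset> frac_coords d t"
    "frac_coords d (move (- em)) \<subset> frac_coords d t"
    unfolding move_def using i j
    by (intro frac_coords_transfer_psubset; auto simp: ep_def em_def min_def)+
  moreover define a where "a = em / (ep + em)"
  have "0 \<le> a" "a \<le> 1" unfolding a_def using ep em by auto
  moreover have "t = (\<lambda>l. a * move ep l + (1 - a) * move (- em) l)"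
  proof -
    have "a * ep - (1 - a) * em = 0" unfolding a_def using ep em by (simp add: field_simps)
    then show ?thesis unfolding move_def using j(2) by (auto simp: fun_eq_iff algebra_simps)
  qed
  ultimately show thesis using that by blast
qed

theorem concave_on_Tset_vertex_le:
  assumes conc: "concave_on_fun (Tset d k) f" and "t \<in> Tset d k"
  shows "\<exists>s\<in>Sset d k. f s \<le> f t"
  using \<open>t \<in> Tset d k\<close>
proof (induction "card (frac_coords d t)" arbitrary: t rule: less_induct)
  case less
  show ?case
  proof (cases "frac_coords d t = {}")
    case True
    then show ?thesis using Sset_if_no_frac_coords[OF less.prems] by blast
  next
    case False
    then obtain i where "i \<in> frac_coords d t" by blast
    then obtain t1 t2 a where t12: "t1 \<in> Tset d k" "t2 \<in> Tset d k"
      and sub: "frac_coords d t1 \<subset> frac_coords d t" "frac_coords d t2 \<subset> frac_coords d t"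
      and a: "0 \<le> a" "a \<le> 1" and comb: "t = (\<lambda>l. a * t1 l + (1 - a) * t2 l)"
      using Tset_split_at_frac_coord[OF less.prems] by metis
    obtain s1 s2 where s: "s1 \<in> Sset d k" "f s1 \<le> f t1" "s2 \<in> Sset d k" "f s2 \<le> f t2"
      using less.hyps[OF psubset_card_mono[OF finite_frac_coords] t12(1)]
        less.hyps[OF psubset_card_mono[OF finite_frac_coords] t12(2)] sub by metis
    have "a * min (f t1) (f t2) + (1 - a) * min (f t1) (f t2) \<le> a * f t1 + (1 - a) * f t2"
      using a by (intro add_mono mult_left_mono) auto
    also have "\<dots> \<le> f t"
      using conc t12 a unfolding concave_on_fun_def comb by blast
    finally have "min (f t1) (f t2) \<le> f t" by (simp add: algebra_simps)
    then show ?thesis using s by (metis min_le_iff_disj order_trans)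
  qed
qed

lemma finite_Sset: "finite (Sset d k)"
proof (rule finite_subset)
  show "Sset d k \<subseteq> (\<lambda>A l. if l \<in> A then 1 else 0) ` Pow {..<d}"
  proof
    fix s assume s: "s \<in> Sset d k"
    have "s l = (if l \<in> {l. l < d \<and> s l = 1} then 1 else 0)" for l
      using s unfolding Sset_def by (cases "l < d") auto
    then have "s = (\<lambda>l. if l \<in> {l. l < d \<and> s l = 1} then 1 else 0)" by blast
    then show "s \<in> (\<lambda>A l. if l \<in> A then 1 else 0) ` Pow {..<d}" by blast
  qed
qed simp

lemma indicator_lessThan_in_Sset:
  assumes "k \<le> d"
  shows "(\<lambda>l. if l < k then 1 else 0) \<in> Sset d k"
proof -
  have "(\<Sum>l<d. if l < k then 1 else (0::real)) = card ({..<d} \<inter> {l. l < k})"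
    by (simp add: sum.If_cases)
  also have "{..<d} \<inter> {l. l < k} = {..<k}" using assms by auto
  finally show ?thesis unfolding Sset_def by auto
qed

theorem concave_on_Tset_min_in_Sset:
  assumes "concave_on_fun (Tset d k) f" "k \<le> d"
  shows "\<exists>s\<in>Sset d k. \<forall>t\<in>Tset d k. f s \<le> f t"
proof -
  let ?s = "arg_min_on f (Sset d k)"
  have ne: "Sset d k \<noteq> {}" using indicator_lessThan_in_Sset[OF assms(2)] by blast
  have "f ?s \<le> f t" if t: "t \<in> Tset d k" for t
  proof -
    obtain s where "s \<in> Sset d k" "f s \<le> f t"
      using concave_on_Tset_vertex_le[OF assms(1) t] by blast
    then show ?thesis using arg_min_least[OF finite_Sset ne] by (meson order_trans)
  qed
  then show ?thesis using arg_min_if_finite(1)[OF finite_Sset ne] by blast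
qed

theorem mainTheorem3:
  fixes n p m k :: nat and y :: "nat \<Rightarrow> real" and x :: "nat \<Rightarrow> nat \<Rightarrow> real"
    and lam \<delta> :: real
  assumes "0 < n" and "m \<le> p"
    and "\<forall>i<n. y i \<in> {0, 1}"
    and "0 \<le> lam"
    and "\<delta> \<ge> nu_max n p m x / (8 * real n)" and "0 < \<delta>"
    and "k \<le> p - m"
  shows "concave_on_fun (open_cube (p - m)) (fobj n p m y x \<delta> lam)
    \<and> concave_on_fun (Tset (p - m) k) (fobj n p m y x \<delta> lam)
    \<and> (\<exists>s\<in>Sset (p - m) k. \<forall>t\<in>Tset (p - m) k.
          fobj n p m y x \<delta> lam s \<le> fobj n p m y x \<delta> lam t)"
proof -
  have box: "concave_on_fun (unit_box (p - m)) (fobj n p m y x \<delta> lam)"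
    using assms(1-6) by (rule fobj_concave_on_unit_box)
  have "open_cube (p - m) \<subseteq> unit_box (p - m)"
    unfolding open_cube_def unit_box_def by (auto simp: less_imp_le)
  moreover have "Tset (p - m) k \<subseteq> unit_box (p - m)"
    unfolding Tset_def unit_box_def by auto
  ultimately have "concave_on_fun (open_cube (p - m)) (fobj n p m y x \<delta> lam)"
    and Tset: "concave_on_fun (Tset (p - m) k) (fobj n p m y x \<delta> lam)"
    using concave_on_fun_subset[OF box] by auto
  then show ?thesis using concave_on_Tset_min_in_Sset[OF Tset assms(7)] by blast
qed

end
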